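(* Let $G\in\mathcal{G}_{k,n,p}$ and $v,w\in V(G)$. Then $H_{wv}\lesssim (pn)^k$.
   Context: Fix an integer $k\ge2$ and let $p=p(n)$ satisfy $\frac{\log n}{n^{(k-1)/k}}\le p\le 1-\Omega(\frac{\log^4 n}{n})$. $\mathcal{G}_{k,n,p}$ denotes the set of graphs $G$ on $n$ vertices satisfying: (i) $G$ is not bipartite; (ii) $\operatorname{diam}(G)\le k$; (iii) every vertex has degree $d(v)=pn\pm\mathcal{O}(\sqrt{pn\log n})$; (iv) $2|E(G)|=pn^2\pm\mathcal{O}(\sqrt{pn^2\log n})$; (v) $|N(v)\cap N(w)|=p^2n\pm\mathcal{O}(\max\{\sqrt{p^2n\log n},\log n\})$ for all $v\ne w$; (vi) the unit eigenvector $\phi$ of the largest adjacency eigenvalue has entries $\phi_i=\frac1{\sqrt n}\pm\mathcal{O}(\frac{\log^{3/2}n}{\sqrt p\,n\log(pn)})$; (vii) $\lambda_1=(1+o(1))pn$; (viii) $\max\{|\lambda_2|,|\lambda_n|\}=\mathcal{O}(\sqrt{pn})$, where $\lambda_1\ge\dots\ge\lambda_n$ are the adjacency eigenvalues. Asymptotic notation is as $n\to\infty$ with constants independent of $n$; $f\lesssim g$ means $f=\mathcal{O}(g)$. $H_{wv}$ is the expected first hitting time of $v$ for a simple random walk on $G$ started at $w$. *)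

theory Defs
  imports "Jordan_Normal_Form.Char_Poly" "HOL-Library.Extended_Nonnegative_Real"
begin

definition simple_graph :: "nat \<Rightarrow> (nat \<Rightarrow> nat \<Rightarrow> bool) \<Rightarrow> bool" where
  "simple_graph n E \<longleftrightarrow> (\<forall>x y. E x y \<longrightarrow> x < n \<and> y < n \<and> x \<noteq> y \<and> E y x)"

definition nbhd :: "nat \<Rightarrow> (nat \<Rightarrow> nat \<Rightarrow> bool) \<Rightarrow> nat \<Rightarrow> nat set" where
  "nbhd n E x = {y. y < n \<and> E x y}"

definition degree :: "nat \<Rightarrow> (nat \<Rightarrow> nat \<Rightarrow> bool) \<Rightarrow> nat \<Rightarrow> nat" where
  "degree n E x = card (nbhd n E x)"

definition num_edges :: "nat \<Rightarrow> (nat \<Rightarrow> nat \<Rightarrow> bool) \<Rightarrow> nat" where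
  "num_edges n E = card {(x, y). x < y \<and> y < n \<and> E x y}"

definition bipartite :: "nat \<Rightarrow> (nat \<Rightarrow> nat \<Rightarrow> bool) \<Rightarrow> bool" where
  "bipartite n E \<longleftrightarrow> (\<exists>S. S \<subseteq> {0..<n} \<and>
      (\<forall>x y. E x y \<longrightarrow> (x \<in> S \<longleftrightarrow> y \<notin> S)))"

fun reach :: "nat \<Rightarrow> (nat \<Rightarrow> nat \<Rightarrow> bool) \<Rightarrow> nat \<Rightarrow> nat \<Rightarrow> nat \<Rightarrow> bool" where
  "reach n E 0 x y = (x = y)"
| "reach n E (Suc t) x y = (reach n E t x y \<or> (\<exists>z<n. reach n E t x z \<and> E z y))"

definition diam_le :: "nat \<Rightarrow> (nat \<Rightarrow> nat \<Rightarrow> bool) \<Rightarrow> nat \<Rightarrow> bool" where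
  "diam_le n E k \<longleftrightarrow> (\<forall>x<n. \<forall>y<n. reach n E k x y)"

definition adj_mat :: "nat \<Rightarrow> (nat \<Rightarrow> nat \<Rightarrow> bool) \<Rightarrow> real mat" where
  "adj_mat n E = mat n n (\<lambda>(i, j). if E i j then 1 else 0)"

definition adj_eigs :: "nat \<Rightarrow> (nat \<Rightarrow> nat \<Rightarrow> bool) \<Rightarrow> real multiset" where
  "adj_eigs n E = proots (char_poly (adj_mat n E))"

definition lambda1 :: "nat \<Rightarrow> (nat \<Rightarrow> nat \<Rightarrow> bool) \<Rightarrow> real" where
  "lambda1 n E = Max (set_mset (adj_eigs n E))"

text \<open>Probability that the simple random walk started at x has avoided v
  at all times 0..t.\<close>
fun surv :: "nat \<Rightarrow> (nat \<Rightarrow> nat \<Rightarrow> bool) \<Rightarrow> nat \<Rightarrow> nat \<Rightarrow> nat \<Rightarrow> real" where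
  "surv n E v 0 x = (if x = v then 0 else 1)"
| "surv n E v (Suc t) x = (if x = v then 0 else
      (\<Sum>y\<in>nbhd n E x. surv n E v t y) / real (degree n E x))"

text \<open>Expected first hitting time of v from w: E[T] = sum over t of P(T > t).\<close>
definition hitting_time :: "nat \<Rightarrow> (nat \<Rightarrow> nat \<Rightarrow> bool) \<Rightarrow> nat \<Rightarrow> nat \<Rightarrow> ennreal" where
  "hitting_time n E w v = (\<Sum>t. ennreal (surv n E v t w))"

text \<open>Membership in G_{k,n,p}, with C the (common) constant in all O-terms and
  eps the size of the o(1)-term in (vii).\<close>
definition in_Gclass :: "nat \<Rightarrow> nat \<Rightarrow> real \<Rightarrow> real \<Rightarrow> real \<Rightarrow> (nat \<Rightarrow> nat \<Rightarrow> bool) \<Rightarrow> bool" where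
  "in_Gclass k n p C eps E \<longleftrightarrow>
     simple_graph n E \<and>
     \<not> bipartite n E \<and>
     diam_le n E k \<and>
     (\<forall>v<n. \<bar>real (degree n E v) - p * n\<bar> \<le> C * sqrt (p * n * ln n)) \<and>
     \<bar>2 * real (num_edges n E) - p * n^2\<bar> \<le> C * sqrt (p * n^2 * ln n) \<and>
     (\<forall>v<n. \<forall>w<n. v \<noteq> w \<longrightarrow>
        \<bar>real (card (nbhd n E v \<inter> nbhd n E w)) - p^2 * n\<bar>
          \<le> C * max (sqrt (p^2 * n * ln n)) (ln n)) \<and>
     (\<exists>\<phi> :: nat \<Rightarrow> real.
        (\<Sum>i<n. (\<phi> i)^2) = 1 \<and>
        (\<forall>i<n. (\<Sum>j\<in>nbhd n E i. \<phi> j) = lambda1 n E * \<phi> i) \<and>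
        (\<forall>i<n. \<bar>\<phi> i - 1 / sqrt n\<bar> \<le> C * (ln n powr (3/2)) / (sqrt p * n * ln (p * n)))) \<and>
     \<bar>lambda1 n E - p * n\<bar> \<le> eps * (p * n) \<and>
     (\<forall>\<mu> \<in># adj_eigs n E - {# lambda1 n E #}. \<bar>\<mu>\<bar> \<le> C * sqrt (p * n))"

end

theory Submission
  imports Defs
begin

text \<open>If every degree is at most D and every vertex is within distance k of v, then from
  any start the walk reaches v within k steps with probability at least 1/D^k, following a
  shortest path. Restarting this argument every k steps, the probability of avoiding v for
  jk steps is at most (1 - 1/D^k)^j, so the expected hitting time is at most k D^k. In
  G_{k,n,p} all degrees are at most (1 + |C|) pn, because the lower bound on p makes pn
  dominate ln n.\<close>

lemma finite_nbhd [simp]: "finite (nbhd n E x)"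
  unfolding nbhd_def by auto

lemma surv_target [simp]: "surv n E v t v = 0"
  by (cases t) auto

lemma surv_nonneg: "0 \<le> surv n E v t x"
  by (induction t arbitrary: x) (simp_all add: sum_nonneg)

lemma surv_le_one: "surv n E v t x \<le> 1"
proof (induction t arbitrary: x)
  case 0
  then show ?case by simp
next
  case (Suc t)
  have "(\<Sum>y\<in>nbhd n E x. surv n E v t y) \<le> real (degree n E x)"
    using sum_mono[of "nbhd n E x" "\<lambda>y. surv n E v t y" "\<lambda>_. 1"] Suc.IH
    by (simp add: degree_def)
  then show ?case
    by (cases "degree n E x = 0") (simp_all add: divide_le_eq_1)
qed

text \<open>Markov property: after s steps without hitting v, the remaining t steps avoid v
  with probability at most M.\<close>
lemma surv_add_le:
  assumes "\<And>y. surv n E v t y \<le> M"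
  shows "surv n E v (s + t) x \<le> M * surv n E v s x"
proof (induction s arbitrary: x)
  case 0
  then show ?case using assms by simp
next
  case (Suc s)
  show ?case
  proof (cases "x = v")
    case False
    have "(\<Sum>y\<in>nbhd n E x. surv n E v (s + t) y) \<le> M * (\<Sum>y\<in>nbhd n E x. surv n E v s y)"
      unfolding sum_distrib_left by (rule sum_mono) (rule Suc.IH)
    then show ?thesis
      using False by (simp add: divide_right_mono)
  qed simp
qed

lemma surv_Suc_le: "surv n E v (Suc s) x \<le> surv n E v s x"
  using surv_add_le[of n E v 1 1 s x] surv_le_one[of n E v 1] by simp

lemma surv_antimono: "s \<le> t \<Longrightarrow> surv n E v t x \<le> surv n E v s x"
proof (induction t rule: dec_induct)
  case (step t)
  then show ?case using surv_Suc_le[of n E v t x] by linarith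
qed simp

lemma surv_mult_le_power:
  assumes "\<And>x. surv n E v k x \<le> r"
  shows "surv n E v (j * k) x \<le> r ^ j"
proof (induction j arbitrary: x)
  case 0
  then show ?case by (simp add: surv_le_one)
next
  case (Suc j)
  have "0 \<le> r"
    using assms[of v] by simp
  have "surv n E v (k + j * k) x \<le> r ^ j * surv n E v k x"
    by (rule surv_add_le) (rule Suc.IH)
  also have "\<dots> \<le> r ^ j * r"
    using assms \<open>0 \<le> r\<close> by (simp add: mult_left_mono)
  finally show ?case
    by (simp add: mult.commute)
qed

lemma sum_surv_le:
  assumes surv_k: "\<And>x. surv n E v k x \<le> r" and "r < 1"
  shows "(\<Sum>t<N. surv n E v t w) \<le> real k / (1 - r)"
proof -
  have "k \<noteq> 0"
  proof
    assume "k = 0"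
    then show False using surv_k[of "Suc v"] \<open>r < 1\<close> by simp
  qed
  have "0 \<le> r"
    using surv_k[of v] by simp
  have block: "(\<Sum>t\<in>{i * k..<i * k + k}. surv n E v t w) \<le> real k * r ^ i" for i
  proof -
    have "surv n E v t w \<le> r ^ i" if "t \<in> {i * k..<i * k + k}" for t
      by (rule order_trans[OF surv_antimono surv_mult_le_power[OF surv_k]]) (use that in simp)
    then show ?thesis
      using sum_mono[of "{i * k..<i * k + k}" "\<lambda>t. surv n E v t w" "\<lambda>_. r ^ i"] by simp
  qed
  have "(\<Sum>t<N. surv n E v t w) \<le> (\<Sum>t<N * k. surv n E v t w)"
    by (rule sum_mono2) (use \<open>k \<noteq> 0\<close> in \<open>auto simp: surv_nonneg\<close>)
  also have "\<dots> = (\<Sum>i<N. \<Sum>t\<in>{i * k..<i * k + k}. surv n E v t w)"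
    by (rule sum.nat_group[symmetric])
  also have "\<dots> \<le> (\<Sum>i<N. real k * r ^ i)"
    by (rule sum_mono) (rule block)
  also have "\<dots> = real k * (1 - r ^ N) / (1 - r)"
    using \<open>r < 1\<close> by (simp add: sum_distrib_left[symmetric] sum_gp_strict)
  also have "\<dots> \<le> real k / (1 - r)"
    using \<open>0 \<le> r\<close> \<open>r < 1\<close> by (simp add: divide_right_mono mult_left_le)
  finally show ?thesis .
qed

lemma hitting_time_le_of_surv:
  assumes "\<And>x. surv n E v k x \<le> r" and "r < 1"
  shows "hitting_time n E w v \<le> ennreal (real k / (1 - r))"
proof -
  have bounded: "(\<Sum>t<N. surv n E v t w) \<le> real k / (1 - r)" for N
    by (rule sum_surv_le[OF assms])
  have summable: "summable (\<lambda>t. surv n E v t w)"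
    by (rule summableI_nonneg_bounded[OF surv_nonneg bounded])
  have "hitting_time n E w v = ennreal (\<Sum>t. surv n E v t w)"
    unfolding hitting_time_def by (rule suminf_ennreal2[OF surv_nonneg summable])
  also have "\<dots> \<le> ennreal (real k / (1 - r))"
    by (rule ennreal_leI, rule suminf_le_const[OF summable bounded])
  finally show ?thesis .
qed

lemma reach_refl: "reach n E t y y"
  by (induction t) auto

lemma reach_SucD:
  assumes sg: "simple_graph n E"
  shows "reach n E (Suc t) x y \<Longrightarrow> x = y \<or> reach n E t x y \<or> (\<exists>z<n. E x z \<and> reach n E t z y)"
proof (induction t arbitrary: y)
  case 0
  then show ?case
    using sg unfolding simple_graph_def by auto
next
  case (Suc t)
  from Suc.prems consider "reach n E (Suc t) x y"
    | z where "z < n" "reach n E (Suc t) x z" "E z y"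
    by auto
  then show ?case
  proof cases
    case 2
    from Suc.IH[OF 2(2)] consider "x = z" | "reach n E t x z"
      | z' where "z' < n" "E x z'" "reach n E t z' z"
      by auto
    then show ?thesis
    proof cases
      case 1
      then have "E x y" "y < n"
        using 2 sg unfolding simple_graph_def by auto
      then show ?thesis
        using reach_refl[of n E "Suc t" y] by blast
    next
      case 2
      then show ?thesis
        using \<open>z < n\<close> \<open>E z y\<close> by auto
    next
      case 3
      then show ?thesis
        using 2 by auto
    qed
  qed auto
qed

text \<open>Walking along a path of length at most t to v, each step chooses the right neighbour
  with probability at least 1/D.\<close>
lemma surv_le_of_reach:
  assumes sg: "simple_graph n E" and "1 \<le> D"
    and deg: "\<And>x. x < n \<Longrightarrow> real (degree n E x) \<le> D"
  shows "reach n E t x v \<Longrightarrow> surv n E v t x \<le> 1 - 1 / D ^ t"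
proof (induction t arbitrary: x)
  case 0
  then show ?case by simp
next
  case (Suc t)
  have "0 < D"
    using \<open>1 \<le> D\<close> by simp
  show ?case
  proof (cases "x = v")
    case True
    then show ?thesis
      using one_le_power[OF \<open>1 \<le> D\<close>, of "Suc t"] by simp
  next
    case False
    from reach_SucD[OF sg Suc.prems] False
    consider "reach n E t x v" | z where "z < n" "E x z" "reach n E t z v"
      by auto
    then show ?thesis
    proof cases
      case 1
      have "1 / D ^ Suc t \<le> 1 / D ^ t"
        using \<open>1 \<le> D\<close> by (simp add: divide_simps)
      then show ?thesis
        using Suc.IH[OF 1] surv_Suc_le[of n E v t x] by linarith
    next
      case 2
      define N where "N = nbhd n E x"
      define d where "d = real (card N)"
      have "z \<in> N" "x < n"
        using 2 sg unfolding N_def nbhd_def simple_graph_def by auto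
      moreover have "finite N"
        by (simp add: N_def)
      ultimately have "1 \<le> card N"
        by (auto simp: Suc_le_eq card_gt_0_iff)
      then have "1 \<le> d" "d \<le> D"
        using deg[OF \<open>x < n\<close>] unfolding d_def N_def degree_def by auto
      have "(\<Sum>y\<in>N. surv n E v t y) = surv n E v t z + (\<Sum>y\<in>N - {z}. surv n E v t y)"
        using \<open>z \<in> N\<close> by (simp add: N_def sum.remove)
      also have "(\<Sum>y\<in>N - {z}. surv n E v t y) \<le> real (card (N - {z}))"
        using sum_mono[of "N - {z}" "surv n E v t" "\<lambda>_. 1"] by (simp add: surv_le_one)
      also have "real (card (N - {z})) = d - 1"
        using \<open>z \<in> N\<close> \<open>1 \<le> card N\<close> by (simp add: d_def of_nat_diff)
      finally have "(\<Sum>y\<in>N. surv n E v t y) \<le> d - 1 / D ^ t"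
        using Suc.IH[OF 2(3)] by linarith
      then have "surv n E v (Suc t) x \<le> (d - 1 / D ^ t) / d"
        using False \<open>1 \<le> d\<close> by (simp add: N_def d_def degree_def divide_right_mono)
      also have "\<dots> = 1 - 1 / (d * D ^ t)"
        using \<open>1 \<le> d\<close> by (simp add: field_simps)
      also have "\<dots> \<le> 1 - 1 / (D * D ^ t)"
        using \<open>1 \<le> d\<close> \<open>d \<le> D\<close> \<open>0 < D\<close> by (simp add: frac_le mult_right_mono)
      finally show ?thesis by simp
    qed
  qed
qed

lemma hitting_time_le_diameter:
  assumes sg: "simple_graph n E" and D: "1 \<le> D"
    and deg: "\<And>x. x < n \<Longrightarrow> real (degree n E x) \<le> D"
    and "1 \<le> k" and "v < n" and reach_v: "\<And>x. x < n \<Longrightarrow> reach n E k x v"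
  shows "hitting_time n E w v \<le> ennreal (real k * D ^ k)"
proof -
  have "surv n E v k x \<le> 1 - 1 / D ^ k" for x
  proof (cases "x < n")
    case True
    show ?thesis
      by (rule surv_le_of_reach[OF sg D deg reach_v[OF True]])
  next
    case False
    then have "nbhd n E x = {}"
      using sg unfolding simple_graph_def nbhd_def by auto
    moreover obtain t where "k = Suc t"
      using \<open>1 \<le> k\<close> by (cases k) auto
    ultimately show ?thesis
      using one_le_power[OF D, of k] by simp
  qed
  moreover have "1 - 1 / D ^ k < 1"
    using D by simp
  ultimately have "hitting_time n E w v \<le> ennreal (real k / (1 - (1 - 1 / D ^ k)))"
    by (rule hitting_time_le_of_surv)
  then show ?thesis by simp
qed

lemma ln_le_mult_of_lower_bound:
  fixes n :: nat and k :: nat and p :: real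
  assumes "1 \<le> n" and "ln n / real n powr ((real k - 1) / real k) \<le> p"
  shows "ln n \<le> p * n"
proof -
  have "(real k - 1) / real k \<le> 1"
    by (cases "k = 0") (simp_all add: divide_le_eq_1)
  then have "real n powr ((real k - 1) / real k) \<le> real n"
    using powr_mono[of _ 1 "real n"] \<open>1 \<le> n\<close> by fastforce
  moreover have "0 < real n powr ((real k - 1) / real k)"
    using \<open>1 \<le> n\<close> by simp
  ultimately have "ln n / real n \<le> ln n / real n powr ((real k - 1) / real k)"
    using \<open>1 \<le> n\<close> by (simp add: frac_le)
  then have "ln n / real n \<le> p"
    using assms(2) by linarith
  then show ?thesis
    using \<open>1 \<le> n\<close> by (simp add: pos_divide_le_eq)
qed

lemma le_of_abs_diff_le_sqrt:
  fixes d P l C :: real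
  assumes "0 \<le> l" and "l \<le> P" and "\<bar>d - P\<bar> \<le> C * sqrt (P * l)"
  shows "d \<le> (1 + \<bar>C\<bar>) * P"
proof -
  have "sqrt (P * l) \<le> sqrt (P * P)"
    by (intro real_sqrt_le_mono mult_left_mono) (use assms in auto)
  also have "\<dots> = P"
    using assms(1,2) by simp
  finally have "sqrt (P * l) \<le> P" .
  have "C * sqrt (P * l) \<le> \<bar>C\<bar> * sqrt (P * l)"
    by (rule mult_right_mono) (use assms(1,2) in auto)
  also have "\<dots> \<le> \<bar>C\<bar> * P"
    using \<open>sqrt (P * l) \<le> P\<close> by (rule mult_left_mono) simp
  finally show ?thesis
    using assms(3) by (simp add: distrib_right)
qed

lemma degree_le_of_in_Gclass:
  assumes "in_Gclass k n p C eps E" and "0 \<le> ln n" and "ln n \<le> p * n" and "x < n"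
  shows "real (degree n E x) \<le> (1 + \<bar>C\<bar>) * (p * n)"
proof (rule le_of_abs_diff_le_sqrt)
  show "\<bar>real (degree n E x) - p * n\<bar> \<le> C * sqrt (p * n * ln n)"
    using assms(1,4) unfolding in_Gclass_def by blast
qed (use assms(2,3) in auto)

lemma hitting_time_le_of_in_Gclass:
  assumes G: "in_Gclass k n p C eps E" and "1 \<le> k" and "3 \<le> n"
    and "ln n / real n powr ((real k - 1) / real k) \<le> p" and "v < n"
  shows "hitting_time n E w v \<le> ennreal (real k * (1 + \<bar>C\<bar>) ^ k * (p * n) ^ k)"
proof -
  have "exp 1 \<le> real n"
    using exp_le \<open>3 \<le> n\<close> by linarith
  then have "1 \<le> ln (real n)"
    using \<open>3 \<le> n\<close> by (simp add: ln_ge_iff)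
  moreover have "ln n \<le> p * n"
    using assms(3,4) by (simp add: ln_le_mult_of_lower_bound)
  ultimately have "1 \<le> (1 + \<bar>C\<bar>) * (p * n)"
    using mult_mono[of 1 "1 + \<bar>C\<bar>" 1 "p * n"] by simp
  moreover have "simple_graph n E" "diam_le n E k"
    using G unfolding in_Gclass_def by blast+
  ultimately have "hitting_time n E w v \<le> ennreal (real k * ((1 + \<bar>C\<bar>) * (p * n)) ^ k)"
    using degree_le_of_in_Gclass[OF G] \<open>1 \<le> ln n\<close> \<open>ln n \<le> p * n\<close> \<open>1 \<le> k\<close> \<open>v < n\<close>
    unfolding diam_le_def by (intro hitting_time_le_diameter) auto
  then show ?thesis
    by (simp add: power_mult_distrib mult.assoc)
qed

theorem lemma4p2:
  fixes k :: nat and p :: "nat \<Rightarrow> real" and C :: real and eps :: "nat \<Rightarrow> real"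
  assumes "k \<ge> 2"
    and "\<forall>\<^sub>F n in sequentially. ln n / real n powr ((real k - 1) / real k) \<le> p n"
    and "\<exists>c>0. \<forall>\<^sub>F n in sequentially. p n \<le> 1 - c * (ln n)^4 / real n"
    and "eps \<longlonglongrightarrow> 0"
  shows "\<exists>K. \<forall>\<^sub>F n in sequentially. \<forall>E. in_Gclass k n (p n) C (eps n) E \<longrightarrow>
           (\<forall>v<n. \<forall>w<n. hitting_time n E w v \<le> ennreal (K * (p n * real n) ^ k))"
proof (intro exI[of _ "real k * (1 + \<bar>C\<bar>) ^ k"])
  show "\<forall>\<^sub>F n in sequentially. \<forall>E. in_Gclass k n (p n) C (eps n) E \<longrightarrow>
          (\<forall>v<n. \<forall>w<n. hitting_time n E w v \<le> ennreal (real k * (1 + \<bar>C\<bar>) ^ k * (p n * n) ^ k))"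
    using assms(2) eventually_ge_at_top[of "3::nat"]
  proof eventually_elim
    case (elim n)
    then show ?case
      using hitting_time_le_of_in_Gclass[of k n "p n" C] \<open>k \<ge> 2\<close> by simp
  qed
qed

end
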